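(* Let $\bm A\in\mathbb R^{m\times n}$, let $\bm D\in\mathbb R^{n\times d}$ with $\bm D\bm D^\top=\bm I_n$, let $0<\alpha\le1$, $\lambda>0$, and let $\bm b=\bm A\bm x+\bm e$ with $\bm x\in\mathbb R^n$ and $\|\bm e\|_2\le\lambda$. Let $t$ be a positive integer and let $T\subseteq\{1,\dots,d\}$ be an index set of $t$ largest-magnitude entries of $\bm D^\top\bm x$. Let $\hat{\bm x}$ be a minimizer of $$\min_{\bm x\in\mathbb R^n}\ \lambda\big(\|\bm D^\top\bm x\|_1-\alpha\|\bm D^\top\bm x\|_2\big)+\tfrac12\|\bm A\bm x-\bm b\|_2^2,$$ and set $\bm h=\hat{\bm x}-\bm x$. Then $$\|\bm A\bm h\|_2^2+2\lambda\|\bm D_{T^c}^\top\bm h\|_1\le2\lambda\big(\|\bm D_T^\top\bm h\|_1+\alpha\|\bm D^\top\bm h\|_2+2\|\bm D_{T^c}^\top\bm x\|_1+\|\bm A\bm h\|_2\big),$$ $$\|\bm A\bm h\|_2^2+2\lambda\big(\|\bm D_{T^c}^\top\bm h\|_1-\alpha\|\bm D_{T^c}^\top\bm h\|_2\big)\le2\lambda\big(\|\bm D_T^\top\bm h\|_1+2\|\bm D_{T^c}^\top\bm x\|_1+\alpha\|\bm D_T^\top\bm h\|_2+\|\bm A\bm h\|_2\big),$$ $$\|\bm D_{T^c}^\top\bm h\|_1\le\|\bm D_T^\top\bm h\|_1+2\|\bm D_{T^c}^\top\bm x\|_1+\alpha\|\bm D^\top\bm h\|_2+\|\bm A\bm h\|_2,$$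 and $$\|\bm A\bm h\|_2^2\le2\lambda\big(\|\bm D_T^\top\bm h\|_1+2\|\bm D_{T^c}^\top\bm x\|_1+\alpha\|\bm D^\top\bm h\|_2+\|\bm A\bm h\|_2\big).$$
   Context: For an index set $S\subseteq\{1,\dots,d\}$, $S^c$ is its complement in $\{1,\dots,d\}$ and $\bm D_S$ denotes the matrix $\bm D$ with all columns not indexed by $S$ set to zero; thus $\bm D_S^\top\bm h$ is the vector $\bm D^\top\bm h$ with the entries outside $S$ set to zero. *)

theory Defs
  imports "HOL-Analysis.Analysis"
begin

definition l1norm :: "real ^ 'd \<Rightarrow> real" where
  "l1norm v = (\<Sum>i\<in>UNIV. \<bar>v $ i\<bar>)"

text \<open>Restriction of a vector to an index set S: entries outside S are set to zero.
  restrict_vec S (transpose D *v h) is D_S^T h.\<close>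
definition restrict_vec :: "'d set \<Rightarrow> real ^ 'd \<Rightarrow> real ^ 'd" where
  "restrict_vec S v = (\<chi> i. if i \<in> S then v $ i else 0)"

definition obj :: "real \<Rightarrow> real \<Rightarrow> real ^ 'n ^ 'm \<Rightarrow> real ^ 'd ^ 'n \<Rightarrow> real ^ 'm \<Rightarrow> real ^ 'n \<Rightarrow> real" where
  "obj lam alpha A D b z =
     lam * (l1norm (transpose D *v z) - alpha * norm (transpose D *v z)) + (1/2) * (norm (A *v z - b))\<^sup>2"

end

theory Submission
  imports Defs
begin

text \<open>Comparing the objective at the minimizer \<open>x + h\<close> with its value at \<open>x\<close>: the noise enters
  through \<open>\<bar>\<langle>A h, e\<rangle>\<bar> \<le> \<lambda> \<parallel>A h\<parallel>\<close>, the \<open>\<alpha>\<close>-term through the triangle inequality for the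
  \<open>\<ell>\<^sub>2\<close>-norm, and the \<open>\<ell>\<^sub>1\<close>-term through a coordinatewise cone estimate splitting
  \<open>D\<^sup>T h\<close> along \<open>T\<close> and its complement. Neither \<open>D D\<^sup>T = I\<close> nor the choice of \<open>T\<close> as the
  \<open>t\<close> largest entries is needed: the estimates hold for every index set \<open>T\<close>.\<close>

lemma l1norm_nonneg: "0 \<le> l1norm v"
  unfolding l1norm_def by (simp add: sum_nonneg)

lemma restrict_vec_add_compl: "restrict_vec S v + restrict_vec (- S) v = v"
  unfolding restrict_vec_def by (simp add: vec_eq_iff)

lemma norm_le_restrict_vec_add_compl:
  "norm v \<le> norm (restrict_vec S v) + norm (restrict_vec (- S) v)"
  using norm_triangle_ineq[of "restrict_vec S v" "restrict_vec (- S) v"]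
  by (simp add: restrict_vec_add_compl)

lemma l1norm_add_lower_bound:
  "l1norm u - l1norm (u + v)
     \<le> l1norm (restrict_vec S v) - l1norm (restrict_vec (- S) v) + 2 * l1norm (restrict_vec (- S) u)"
proof -
  have "l1norm u - l1norm (u + v) = (\<Sum>i\<in>UNIV. \<bar>u$i\<bar> - \<bar>(u + v)$i\<bar>)"
    unfolding l1norm_def by (simp add: sum_subtractf)
  also have "\<dots> \<le> (\<Sum>i\<in>UNIV. \<bar>restrict_vec S v $ i\<bar> - \<bar>restrict_vec (- S) v $ i\<bar>
                                + 2 * \<bar>restrict_vec (- S) u $ i\<bar>)"
    by (rule sum_mono) (auto simp: restrict_vec_def)
  also have "\<dots> = l1norm (restrict_vec S v) - l1norm (restrict_vec (- S) v)
                   + 2 * l1norm (restrict_vec (- S) u)"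
    unfolding l1norm_def by (simp add: sum.distrib sum_subtractf sum_distrib_left)
  finally show ?thesis .
qed

lemma power2_norm_diff_lower_bound:
  fixes a e :: "'a::real_inner"
  assumes "norm e \<le> c"
  shows "(norm a)\<^sup>2 - 2 * c * norm a + (norm e)\<^sup>2 \<le> (norm (a - e))\<^sup>2"
proof -
  have "a \<bullet> e \<le> norm a * norm e" by (rule norm_cauchy_schwarz)
  also have "\<dots> \<le> norm a * c" using assms by (simp add: mult_left_mono)
  finally have "a \<bullet> e \<le> c * norm a" by (simp add: mult.commute)
  moreover have "(norm (a - e))\<^sup>2 = (norm a)\<^sup>2 - 2 * (a \<bullet> e) + (norm e)\<^sup>2"
    by (simp add: power2_norm_eq_inner inner_diff_left inner_diff_right inner_commute)
  ultimately show ?thesis by linarith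
qed

lemma obj_minimizer_basic_inequality:
  fixes A :: "real ^ 'n ^ 'm" and D :: "real ^ 'd ^ 'n"
  assumes "0 \<le> alpha" "0 \<le> lam"
    and "b = A *v x + e" "norm e \<le> lam"
    and "obj lam alpha A D b (x + h) \<le> obj lam alpha A D b x"
  shows "(norm (A *v h))\<^sup>2
           \<le> 2 * lam * (norm (A *v h) + l1norm (transpose D *v x)
                         - l1norm (transpose D *v x + transpose D *v h) + alpha * norm (transpose D *v h))"
proof -
  define u where "u = transpose D *v x"
  define v where "v = transpose D *v h"
  have "lam * (l1norm (u + v) - alpha * norm (u + v)) + (1/2) * (norm (A *v h - e))\<^sup>2
          \<le> lam * (l1norm u - alpha * norm u) + (1/2) * (norm e)\<^sup>2"
    using assms(5) unfolding obj_def u_def v_def assms(3)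
    by (simp add: matrix_vector_right_distrib algebra_simps)
  moreover have "lam * alpha * (norm (u + v) - norm u) \<le> lam * alpha * norm v"
    using norm_triangle_ineq[of u v] assms(1,2) by (simp add: mult_left_mono)
  moreover have "(norm (A *v h))\<^sup>2 - 2 * lam * norm (A *v h) + (norm e)\<^sup>2 \<le> (norm (A *v h - e))\<^sup>2"
    using assms(4) by (rule power2_norm_diff_lower_bound)
  ultimately show ?thesis unfolding u_def v_def by (simp add: algebra_simps)
qed

lemma obj_minimizer_cone_inequality:
  fixes A :: "real ^ 'n ^ 'm" and D :: "real ^ 'd ^ 'n"
  assumes "0 \<le> alpha" "0 \<le> lam"
    and "b = A *v x + e" "norm e \<le> lam"
    and "obj lam alpha A D b (x + h) \<le> obj lam alpha A D b x"
  shows "(norm (A *v h))\<^sup>2 + 2 * lam * l1norm (restrict_vec (- T) (transpose D *v h))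
           \<le> 2 * lam * (l1norm (restrict_vec T (transpose D *v h)) + alpha * norm (transpose D *v h)
                         + 2 * l1norm (restrict_vec (- T) (transpose D *v x)) + norm (A *v h))"
proof -
  have "2 * lam * (l1norm (transpose D *v x) - l1norm (transpose D *v x + transpose D *v h))
          \<le> 2 * lam * (l1norm (restrict_vec T (transpose D *v h)) - l1norm (restrict_vec (- T) (transpose D *v h))
                        + 2 * l1norm (restrict_vec (- T) (transpose D *v x)))"
    using l1norm_add_lower_bound[of "transpose D *v x" "transpose D *v h" T] assms(2)
    by (simp add: mult_left_mono)
  with obj_minimizer_basic_inequality[OF assms] show ?thesis by (simp add: algebra_simps)
qed

theorem lemma2:
  fixes A :: "real ^ 'n ^ 'm" and D :: "real ^ 'd ^ 'n"
    and x xhat :: "real ^ 'n" and e b :: "real ^ 'm"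
    and alpha lam :: real and t :: nat and T :: "'d set"
  assumes DDt: "D ** transpose D = mat 1"
    and alpha: "0 < alpha" "alpha \<le> 1"
    and lam: "lam > 0"
    and b: "b = A *v x + e"
    and e: "norm e \<le> lam"
    and t: "t > 0"
    and T_card: "card T = t"
    and T_largest: "\<forall>i\<in>T. \<forall>j\<in>- T. \<bar>(transpose D *v x) $ j\<bar> \<le> \<bar>(transpose D *v x) $ i\<bar>"
    and min: "\<forall>z. obj lam alpha A D b xhat \<le> obj lam alpha A D b z"
  defines "h \<equiv> xhat - x"
  shows
    "(norm (A *v h))\<^sup>2 + 2 * lam * l1norm (restrict_vec (- T) (transpose D *v h))
       \<le> 2 * lam * (l1norm (restrict_vec T (transpose D *v h)) + alpha * norm (transpose D *v h)
          + 2 * l1norm (restrict_vec (- T) (transpose D *v x)) + norm (A *v h))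
   \<and> (norm (A *v h))\<^sup>2 + 2 * lam * (l1norm (restrict_vec (- T) (transpose D *v h))
          - alpha * norm (restrict_vec (- T) (transpose D *v h)))
       \<le> 2 * lam * (l1norm (restrict_vec T (transpose D *v h))
          + 2 * l1norm (restrict_vec (- T) (transpose D *v x))
          + alpha * norm (restrict_vec T (transpose D *v h)) + norm (A *v h))
   \<and> l1norm (restrict_vec (- T) (transpose D *v h))
       \<le> l1norm (restrict_vec T (transpose D *v h)) + 2 * l1norm (restrict_vec (- T) (transpose D *v x))
          + alpha * norm (transpose D *v h) + norm (A *v h)
   \<and> (norm (A *v h))\<^sup>2
       \<le> 2 * lam * (l1norm (restrict_vec T (transpose D *v h)) + 2 * l1norm (restrict_vec (- T) (transpose D *v x))
          + alpha * norm (transpose D *v h) + norm (A *v h))"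
proof -
  let ?v = "transpose D *v h"
  have "obj lam alpha A D b (x + h) \<le> obj lam alpha A D b x"
    using min unfolding h_def by simp
  then have cone: "(norm (A *v h))\<^sup>2 + 2 * lam * l1norm (restrict_vec (- T) ?v)
      \<le> 2 * lam * (l1norm (restrict_vec T ?v) + alpha * norm ?v
                    + 2 * l1norm (restrict_vec (- T) (transpose D *v x)) + norm (A *v h))"
    using obj_minimizer_cone_inequality alpha(1) lam b e by (metis less_imp_le)
  have "2 * lam * alpha * norm ?v
          \<le> 2 * lam * alpha * (norm (restrict_vec T ?v) + norm (restrict_vec (- T) ?v))"
    using norm_le_restrict_vec_add_compl alpha(1) lam by (simp add: mult_left_mono)
  moreover have "l1norm (restrict_vec (- T) ?v)
      \<le> l1norm (restrict_vec T ?v) + 2 * l1norm (restrict_vec (- T) (transpose D *v x))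
         + alpha * norm ?v + norm (A *v h)"
  proof -
    have "2 * lam * l1norm (restrict_vec (- T) ?v)
        \<le> 2 * lam * (l1norm (restrict_vec T ?v) + 2 * l1norm (restrict_vec (- T) (transpose D *v x))
                      + alpha * norm ?v + norm (A *v h))"
      using cone zero_le_power2[of "norm (A *v h)"] by (simp only: algebra_simps)
    then show ?thesis using lam by simp
  qed
  moreover have "0 \<le> lam * l1norm (restrict_vec (- T) ?v)"
    using lam by (simp add: l1norm_nonneg)
  ultimately show ?thesis using cone lam by (simp add: algebra_simps)
qed

end
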